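(* Let $R \xrightarrow{\tau} A \xrightarrow{\lambda} C \xrightarrow{g_C} B$ be ring morphisms and put $g := g_C\circ\lambda : A \to B$. Regard $C$ as an $R$-algebra via $\lambda\circ\tau$. Then $A^*_{B,R} \subseteq C^*_{B,R}$, where $A^*_{B,R}$ is the Lipschitz saturation of $A$ in $B$ relative to $R \xrightarrow{\tau} A \xrightarrow{g} B$ and $C^*_{B,R}$ is the Lipschitz saturation of $C$ in $B$ relative to $R \xrightarrow{\lambda\circ\tau} C \xrightarrow{g_C} B$.
   Context: All rings are commutative with identity. For a sequence of ring morphisms $R \to A' \xrightarrow{h} B$, let $\varphi: B\otimes_R B \to B \otimes_{A'} B$ be the canonical $R$-algebra morphism $x\otimes_R y \mapsto x \otimes_{A'} y$, and let $\Delta: B \to B\otimes_R B$, $\Delta(b) = b\otimes_R 1 - 1 \otimes_R b$. The Lipschitz saturation of $A'$ in $B$ relative to $R\to A'\to B$ is $(A')^*_{B,R} := \{x \in B \mid \Delta(x) \in \overline{\ker\varphi}\}$, where for an ideal $I$ of a ring $S$, $\overline{I}$ denotes the integral closure of $I$: the set of $u\in S$ satisfying $u^n + a_1u^{n-1}+\cdots+a_n = 0$ for some $n\ge 1$ and $a_i \in I^i$. *)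

theory Defs
  imports "HOL-Algebra.Algebra"
begin

text \<open>The free abelian group (= monoid ring over the integers) on the set
  carrier B \<times> carrier B, with multiplication (b1,b2)(c1,c2) = (b1 c1, b2 c2)
  extended bilinearly.\<close>

definition fsupp :: "('x \<Rightarrow> int) \<Rightarrow> 'x set" where
  "fsupp f = {p. f p \<noteq> 0}"

definition ind :: "'x \<Rightarrow> 'x \<Rightarrow> int" where
  "ind p = (\<lambda>q. if q = p then 1 else 0)"

definition free_pair_ring :: "('b, 'm) ring_scheme \<Rightarrow> ('b \<times> 'b \<Rightarrow> int) ring" where
  "free_pair_ring B =
     \<lparr> carrier = {f. finite (fsupp f) \<and> fsupp f \<subseteq> carrier B \<times> carrier B},
       monoid.mult = (\<lambda>f g p. \<Sum>q\<in>fsupp f. \<Sum>r\<in>fsupp g.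
                 (if (fst q \<otimes>\<^bsub>B\<^esub> fst r, snd q \<otimes>\<^bsub>B\<^esub> snd r) = p then f q * g r else 0)),
       monoid.one = ind (\<one>\<^bsub>B\<^esub>, \<one>\<^bsub>B\<^esub>),
       ring.zero = (\<lambda>_. 0),
       ring.add = (\<lambda>f g p. f p + g p) \<rparr>"

text \<open>Generators of the kernel of the free group onto B \<otimes>_S B, where
  B is an S-algebra through f : S \<rightarrow> B (bilinearity and S-balancedness).\<close>

definition tensor_rels :: "('s, 'n) ring_scheme \<Rightarrow> ('b, 'm) ring_scheme \<Rightarrow> ('s \<Rightarrow> 'b)
                             \<Rightarrow> ('b \<times> 'b \<Rightarrow> int) set" where
  "tensor_rels S B f =
     {(\<lambda>p. ind (x \<oplus>\<^bsub>B\<^esub> x', y) p - ind (x, y) p - ind (x', y) p) | x x' y.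
         x \<in> carrier B \<and> x' \<in> carrier B \<and> y \<in> carrier B}
   \<union> {(\<lambda>p. ind (x, y \<oplus>\<^bsub>B\<^esub> y') p - ind (x, y) p - ind (x, y') p) | x y y'.
         x \<in> carrier B \<and> y \<in> carrier B \<and> y' \<in> carrier B}
   \<union> {(\<lambda>p. ind (f s \<otimes>\<^bsub>B\<^esub> x, y) p - ind (x, f s \<otimes>\<^bsub>B\<^esub> y) p) | s x y.
         s \<in> carrier S \<and> x \<in> carrier B \<and> y \<in> carrier B}"

definition tensor_ker :: "('s, 'n) ring_scheme \<Rightarrow> ('b, 'm) ring_scheme \<Rightarrow> ('s \<Rightarrow> 'b)
                            \<Rightarrow> ('b \<times> 'b \<Rightarrow> int) set" where
  "tensor_ker S B f = genideal (free_pair_ring B) (tensor_rels S B f)"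

definition tensor_ring :: "('s, 'n) ring_scheme \<Rightarrow> ('b, 'm) ring_scheme \<Rightarrow> ('s \<Rightarrow> 'b)
                             \<Rightarrow> ('b \<times> 'b \<Rightarrow> int) set ring" where
  "tensor_ring S B f = free_pair_ring B Quot tensor_ker S B f"

definition tens :: "('s, 'n) ring_scheme \<Rightarrow> ('b, 'm) ring_scheme \<Rightarrow> ('s \<Rightarrow> 'b)
                      \<Rightarrow> 'b \<Rightarrow> 'b \<Rightarrow> ('b \<times> 'b \<Rightarrow> int) set" where
  "tens S B f x y = a_r_coset (free_pair_ring B) (tensor_ker S B f) (ind (x, y))"

definition tdelta :: "('s, 'n) ring_scheme \<Rightarrow> ('b, 'm) ring_scheme \<Rightarrow> ('s \<Rightarrow> 'b)
                        \<Rightarrow> 'b \<Rightarrow> ('b \<times> 'b \<Rightarrow> int) set" where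
  "tdelta S B f b = tens S B f b \<one>\<^bsub>B\<^esub> \<ominus>\<^bsub>tensor_ring S B f\<^esub> tens S B f \<one>\<^bsub>B\<^esub> b"

text \<open>The canonical map B \<otimes>_R B \<rightarrow> B \<otimes>_A' B (x \<otimes>_R y \<mapsto> x \<otimes>_A' y),
  with R \<rightarrow> B given by fR and A' \<rightarrow> B given by fA: it sends the class of
  a representative u to the class of u.\<close>
definition tensor_can :: "('s, 'n) ring_scheme \<Rightarrow> ('t, 'k) ring_scheme \<Rightarrow> ('b, 'm) ring_scheme
     \<Rightarrow> ('s \<Rightarrow> 'b) \<Rightarrow> ('t \<Rightarrow> 'b) \<Rightarrow> ('b \<times> 'b \<Rightarrow> int) set \<Rightarrow> ('b \<times> 'b \<Rightarrow> int) set" where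
  "tensor_can R A B fR fA Z = {v. \<exists>u\<in>Z. v \<in> a_r_coset (free_pair_ring B) (tensor_ker A B fA) u}"

fun ideal_pow :: "('a, 'm) ring_scheme \<Rightarrow> 'a set \<Rightarrow> nat \<Rightarrow> 'a set" where
  "ideal_pow S I 0 = carrier S"
| "ideal_pow S I (Suc n) = ideal_prod S I (ideal_pow S I n)"

definition int_closure :: "('a, 'm) ring_scheme \<Rightarrow> 'a set \<Rightarrow> 'a set" where
  "int_closure S I = {u \<in> carrier S. \<exists>n a. n \<ge> 1 \<and> (\<forall>i\<in>{1..n}. a i \<in> ideal_pow S I i) \<and>
      u [^]\<^bsub>S\<^esub> n \<oplus>\<^bsub>S\<^esub> (\<Oplus>\<^bsub>S\<^esub> i\<in>{1..n}. a i \<otimes>\<^bsub>S\<^esub> u [^]\<^bsub>S\<^esub> (n - i)) = \<zero>\<^bsub>S\<^esub>}"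

definition lip_sat :: "('r, 'n) ring_scheme \<Rightarrow> ('a, 'k) ring_scheme \<Rightarrow> ('b, 'm) ring_scheme
     \<Rightarrow> ('r \<Rightarrow> 'a) \<Rightarrow> ('a \<Rightarrow> 'b) \<Rightarrow> 'b set" where
  "lip_sat R A B tau h =
     (let T = tensor_ring R B (h \<circ> tau);
          K = {Z \<in> carrier T. tensor_can R A B (h \<circ> tau) h Z = \<zero>\<^bsub>tensor_ring A B h\<^esub>}
      in {x \<in> carrier B. tdelta R B (h \<circ> tau) x \<in> int_closure T K})"

end

theory Submission
  imports Defs
begin

text \<open>The \<open>C\<close>-balancedness relations of \<open>B \<otimes>\<^sub>C B\<close> include the \<open>A\<close>-balancedness relations
  \<open>g(s) x \<otimes> y = x \<otimes> g(s) y\<close>, since \<open>g(s) = g\<^sub>C(\<lambda>(s))\<close>. Hence \<open>B \<otimes>\<^sub>R B \<rightarrow> B \<otimes>\<^sub>A B\<close> factors through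
  \<open>B \<otimes>\<^sub>C B\<close>, so its kernel is contained in that of \<open>B \<otimes>\<^sub>R B \<rightarrow> B \<otimes>\<^sub>C B\<close>. Both saturations test
  the same element \<open>\<Delta>(x)\<close> of the same ring \<open>B \<otimes>\<^sub>R B\<close>, and integral closure of ideals is
  monotone.\<close>

lemma ideal_prod_mono:
  assumes "I \<subseteq> I'" and "J \<subseteq> J'"
  shows "ideal_prod S I J \<subseteq> ideal_prod S I' J'"
proof
  fix x assume "x \<in> ideal_prod S I J"
  then show "x \<in> ideal_prod S I' J'"
  proof induct
    case (prod i j)
    then show ?case using assms by (blast intro: ideal_prod.prod)
  next
    case (sum s1 s2)
    then show ?case by (blast intro: ideal_prod.sum)
  qed
qed

lemma ideal_pow_mono:
  assumes "I \<subseteq> I'"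
  shows "ideal_pow S I n \<subseteq> ideal_pow S I' n"
  by (induction n) (simp_all add: ideal_prod_mono[OF assms])

lemma int_closure_mono:
  assumes "I \<subseteq> I'"
  shows "int_closure S I \<subseteq> int_closure S I'"
  unfolding int_closure_def using ideal_pow_mono[OF assms] by blast

lemma genideal_mono:
  fixes S :: "('a, 'm) ring_scheme"
  assumes "Xs \<subseteq> Ys"
  shows "genideal S Xs \<subseteq> genideal S Ys"
  unfolding genideal_def using assms by blast

lemma free_pair_ring_add: "x \<oplus>\<^bsub>free_pair_ring B\<^esub> y = (\<lambda>p. x p + y p)"
  by (simp add: free_pair_ring_def)

lemma free_pair_ring_zero: "\<zero>\<^bsub>free_pair_ring B\<^esub> = (\<lambda>_. 0)"
  by (simp add: free_pair_ring_def)

lemma free_pair_ring_a_inv: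
  assumes "ring (free_pair_ring B)" and "y \<in> carrier (free_pair_ring B)"
  shows "\<ominus>\<^bsub>free_pair_ring B\<^esub> y = (\<lambda>p. - y p)"
proof -
  interpret ring "free_pair_ring B" by fact
  have "y \<oplus>\<^bsub>free_pair_ring B\<^esub> \<ominus>\<^bsub>free_pair_ring B\<^esub> y = \<zero>\<^bsub>free_pair_ring B\<^esub>"
    using assms(2) by (rule r_neg)
  then have "\<And>p. y p + (\<ominus>\<^bsub>free_pair_ring B\<^esub> y) p = 0"
    by (metis free_pair_ring_add free_pair_ring_zero)
  then show ?thesis by (simp add: fun_eq_iff eq_neg_iff_add_eq_0 add.commute)
qed

text \<open>No ring axioms of \<^const>\<open>free_pair_ring\<close> are needed below: membership in a generated
  ideal is checked in every ideal \<open>J\<close>, and the existence of \<open>J\<close> already makes it a ring.\<close>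

lemma ideal_free_pair_ring_zero:
  assumes "ideal J (free_pair_ring B)"
  shows "(\<lambda>_. 0) \<in> J"
  using additive_subgroup.zero_closed[OF ideal.axioms(1)[OF assms]]
  by (simp add: free_pair_ring_zero)

lemma ideal_free_pair_ring_diff:
  assumes "ideal J (free_pair_ring B)" and "x \<in> J" and "y \<in> J"
  shows "(\<lambda>p. x p - y p) \<in> J"
proof -
  interpret ideal J "free_pair_ring B" by fact
  have "x \<ominus>\<^bsub>free_pair_ring B\<^esub> y \<in> J"
    using assms(2,3) by (simp add: a_minus_def a_closed a_inv_closed)
  moreover have "\<ominus>\<^bsub>free_pair_ring B\<^esub> y = (\<lambda>p. - y p)"
    using free_pair_ring_a_inv[OF ring_axioms] assms(3) a_subset by blast
  ultimately show ?thesis by (simp add: a_minus_def free_pair_ring_add)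
qed

lemma genideal_free_pair_ring_zero: "(\<lambda>_. 0) \<in> genideal (free_pair_ring B) Xs"
  unfolding genideal_def by (blast intro: ideal_free_pair_ring_zero)

lemma genideal_free_pair_ring_diff:
  assumes "x \<in> genideal (free_pair_ring B) Xs" and "y \<in> genideal (free_pair_ring B) Xs"
  shows "(\<lambda>p. x p - y p) \<in> genideal (free_pair_ring B) Xs"
  using assms unfolding genideal_def by (blast intro: ideal_free_pair_ring_diff)

lemma genideal_free_pair_ring_add:
  assumes "x \<in> genideal (free_pair_ring B) Xs" and "y \<in> genideal (free_pair_ring B) Xs"
  shows "(\<lambda>p. x p + y p) \<in> genideal (free_pair_ring B) Xs"
proof -
  have "(\<lambda>p. 0 - y p) \<in> genideal (free_pair_ring B) Xs"
    using genideal_free_pair_ring_diff[OF genideal_free_pair_ring_zero assms(2)] .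
  from genideal_free_pair_ring_diff[OF assms(1) this] show ?thesis by simp
qed

lemma tensor_ker_coset_self: "u \<in> tensor_ker S B f +>\<^bsub>free_pair_ring B\<^esub> u"
  using genideal_free_pair_ring_zero
  unfolding tensor_ker_def a_r_coset_def' free_pair_ring_add by fastforce

lemma tensor_ker_coset_member:
  assumes "u \<in> tensor_ker S B f"
  shows "tensor_ker S B f +>\<^bsub>free_pair_ring B\<^esub> u = tensor_ker S B f"
proof safe
  fix v assume "v \<in> tensor_ker S B f +>\<^bsub>free_pair_ring B\<^esub> u"
  then show "v \<in> tensor_ker S B f"
    using assms genideal_free_pair_ring_add
    unfolding tensor_ker_def a_r_coset_def' free_pair_ring_add by fastforce
next
  fix v assume v: "v \<in> tensor_ker S B f"
  have "v = (\<lambda>p. (v p - u p) + u p)" by simp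
  moreover have "(\<lambda>p. v p - u p) \<in> tensor_ker S B f"
    using genideal_free_pair_ring_diff v assms unfolding tensor_ker_def by blast
  ultimately show "v \<in> tensor_ker S B f +>\<^bsub>free_pair_ring B\<^esub> u"
    unfolding a_r_coset_def' free_pair_ring_add by blast
qed

lemma tensor_can_eq_zero_iff:
  "tensor_can R A B fR fA Z = \<zero>\<^bsub>tensor_ring A B fA\<^esub> \<longleftrightarrow> Z \<noteq> {} \<and> Z \<subseteq> tensor_ker A B fA"
proof -
  let ?K = "tensor_ker A B fA"
  have can: "tensor_can R A B fR fA Z = (\<Union>u\<in>Z. ?K +>\<^bsub>free_pair_ring B\<^esub> u)"
    unfolding tensor_can_def by blast
  have zero: "\<zero>\<^bsub>tensor_ring A B fA\<^esub> = ?K"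
    by (simp add: tensor_ring_def FactRing_def)
  show ?thesis
  proof
    assume "tensor_can R A B fR fA Z = \<zero>\<^bsub>tensor_ring A B fA\<^esub>"
    then have Z: "(\<Union>u\<in>Z. ?K +>\<^bsub>free_pair_ring B\<^esub> u) = ?K"
      unfolding can zero .
    have "(\<lambda>_. 0) \<in> ?K"
      unfolding tensor_ker_def by (rule genideal_free_pair_ring_zero)
    with Z have "Z \<noteq> {}" by auto
    moreover have "Z \<subseteq> ?K"
      using Z tensor_ker_coset_self[where S = A and f = fA] by blast
    ultimately show "Z \<noteq> {} \<and> Z \<subseteq> ?K" ..
  next
    assume "Z \<noteq> {} \<and> Z \<subseteq> ?K"
    then show "tensor_can R A B fR fA Z = \<zero>\<^bsub>tensor_ring A B fA\<^esub>"
      unfolding can zero using tensor_ker_coset_member[where S = A and f = fA] by auto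
  qed
qed

lemma tensor_ker_mono:
  assumes "lam \<in> carrier A \<rightarrow> carrier C"
  shows "tensor_ker A B (gC \<circ> lam) \<subseteq> tensor_ker C B gC"
proof -
  have "tensor_rels A B (gC \<circ> lam) \<subseteq> tensor_rels C B gC"
    using assms unfolding tensor_rels_def o_apply by (intro Un_mono subset_refl) blast
  then show ?thesis unfolding tensor_ker_def by (rule genideal_mono)
qed

lemma lip_sat_mono:
  assumes "h \<circ> tau = h' \<circ> tau'" and "tensor_ker A B h \<subseteq> tensor_ker C B h'"
  shows "lip_sat R A B tau h \<subseteq> lip_sat R C B tau' h'"
proof -
  let ?T = "tensor_ring R B (h \<circ> tau)"
  have "{Z \<in> carrier ?T. tensor_can R A B (h \<circ> tau) h Z = \<zero>\<^bsub>tensor_ring A B h\<^esub>}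
      \<subseteq> {Z \<in> carrier ?T. tensor_can R C B (h \<circ> tau) h' Z = \<zero>\<^bsub>tensor_ring C B h'\<^esub>}"
    using assms(2) by (auto simp: tensor_can_eq_zero_iff)
  then show ?thesis
    unfolding lip_sat_def Let_def assms(1) using int_closure_mono by blast
qed

theorem mainTheorem2:
  fixes R :: "('r, 'n) ring_scheme" and A :: "('a, 'k) ring_scheme"
    and C :: "('c, 'l) ring_scheme" and B :: "('b, 'm) ring_scheme"
    and tau :: "'r \<Rightarrow> 'a" and lam :: "'a \<Rightarrow> 'c" and gC :: "'c \<Rightarrow> 'b"
  assumes "cring R" and "cring A" and "cring C" and "cring B"
    and "tau \<in> ring_hom R A" and "lam \<in> ring_hom A C" and "gC \<in> ring_hom C B"
  shows "lip_sat R A B tau (gC \<circ> lam) \<subseteq> lip_sat R C B (lam \<circ> tau) gC"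
proof (rule lip_sat_mono)
  show "gC \<circ> lam \<circ> tau = gC \<circ> (lam \<circ> tau)" by (rule comp_assoc)
  show "tensor_ker A B (gC \<circ> lam) \<subseteq> tensor_ker C B gC"
    using assms(6) by (intro tensor_ker_mono) (simp add: ring_hom_closed)
qed

end
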